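(* Let $l\ge2$ and let $H=[h_1,\dots,h_l]\in\mathbb{R}^{5\times l}$ be a structured embedding matrix. For every $1\le k<l$ there is a two-layer ReLU feed-forward network $\mathrm{FFN}:\mathbb{R}^5\to\mathbb{R}^5$ (applied token-wise) with all parameters bounded in absolute value by $O(l\|H\|_\infty)$ such that $$\mathrm{FFN}(h_t)=h_t\ \text{ for } 1\le t\le k,\qquad \mathrm{FFN}(h_t)=(0,0,\mathcal{I}_t^1,\mathcal{I}_t^2,1)^\top\ \text{ for } k<t\le l.$$ Likewise, there is such a network with $\mathrm{FFN}(h_t)=h_t$ for $k\le t\le l$ and $\mathrm{FFN}(h_t)=(0,0,\mathcal{I}_t^1,\mathcal{I}_t^2,1)^\top$ for $t<k$.
   Context: A two-layer ReLU feed-forward network is a map $h\mapsto W_2\sigma(W_1h+b_1)+b_2$ with $\sigma(x)=\max(0,x)$ entrywise. A structured embedding matrix $H\in\mathbb{R}^{5\times l}$ is one whose $t$-th column $h_t$ has entries $(h_t^3,h_t^4)=\mathcal{I}_t=(\cos(\tfrac{t}{l}\tfrac{\pi}{2}),\sin(\tfrac{t}{l}\tfrac{\pi}{2}))$ and $h_t^5=1$; $h_t^1,h_t^2$ are arbitrary. $\|H\|_\infty$ is the maximal absolute entry. *)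

theory Defs
  imports Complex_Main
begin

text \<open>Vectors in R^5 are functions nat => real, read on coordinates 1..5.
  The embedding matrix H is a function h :: nat => nat => real, column t (1..l), row i (1..5).\<close>

definition relu :: "real \<Rightarrow> real" where
  "relu x = max 0 x"

definition ffn :: "nat \<Rightarrow> (nat \<Rightarrow> nat \<Rightarrow> real) \<Rightarrow> (nat \<Rightarrow> real) \<Rightarrow>
    (nat \<Rightarrow> nat \<Rightarrow> real) \<Rightarrow> (nat \<Rightarrow> real) \<Rightarrow> (nat \<Rightarrow> real) \<Rightarrow> nat \<Rightarrow> real" where
  "ffn m W1 b1 W2 b2 x = (\<lambda>i. b2 i + (\<Sum>j<m. W2 i j * relu (b1 j + (\<Sum>r\<in>{1..5}. W1 j r * x r))))"

definition params_bounded :: "nat \<Rightarrow> (nat \<Rightarrow> nat \<Rightarrow> real) \<Rightarrow> (nat \<Rightarrow> real) \<Rightarrow>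
    (nat \<Rightarrow> nat \<Rightarrow> real) \<Rightarrow> (nat \<Rightarrow> real) \<Rightarrow> real \<Rightarrow> bool" where
  "params_bounded m W1 b1 W2 b2 B \<longleftrightarrow>
     (\<forall>j<m. \<forall>r\<in>{1..5}. \<bar>W1 j r\<bar> \<le> B) \<and> (\<forall>j<m. \<bar>b1 j\<bar> \<le> B) \<and>
     (\<forall>i\<in>{1..5}. \<forall>j<m. \<bar>W2 i j\<bar> \<le> B) \<and> (\<forall>i\<in>{1..5}. \<bar>b2 i\<bar> \<le> B)"

definition pos1 :: "nat \<Rightarrow> nat \<Rightarrow> real" where
  "pos1 l t = cos (real t / real l * (pi / 2))"
definition pos2 :: "nat \<Rightarrow> nat \<Rightarrow> real" where
  "pos2 l t = sin (real t / real l * (pi / 2))"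

definition structured :: "nat \<Rightarrow> (nat \<Rightarrow> nat \<Rightarrow> real) \<Rightarrow> bool" where
  "structured l h \<longleftrightarrow> (\<forall>t\<in>{1..l}. h t 3 = pos1 l t \<and> h t 4 = pos2 l t \<and> h t 5 = 1)"

definition Hinf :: "nat \<Rightarrow> (nat \<Rightarrow> nat \<Rightarrow> real) \<Rightarrow> real" where
  "Hinf l h = Max {\<bar>h t i\<bar> | t i. t \<in> {1..l} \<and> i \<in> {1..5}}"

definition erased :: "nat \<Rightarrow> nat \<Rightarrow> nat \<Rightarrow> real" where
  "erased l t i = (if i = 3 then pos1 l t else if i = 4 then pos2 l t else if i = 5 then 1 else 0)"

end

theory Submission
  imports Defs
begin

text \<open>The network passes \<open>x\<^sub>3, x\<^sub>4\<close> through via \<open>relu u - relu (-u) = u\<close>, produces the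
  constant coordinate from the output bias, and gates \<open>x\<^sub>1, x\<^sub>2\<close> by adding a common gate value
  \<open>g = a x\<^sub>3 + c x\<^sub>4\<close> to \<open>\<plusminus>x\<^sub>1, \<plusminus>x\<^sub>2\<close>: \<open>(relu (x + g) - relu (-x + g)) / 2\<close> is \<open>x\<close> when
  \<open>g \<ge> \<bar>x\<bar>\<close> and \<open>0\<close> when \<open>g \<le> -\<bar>x\<bar>\<close>.
  With \<open>(a, c) = M \<sigma> (sin \<phi>, - cos \<phi>)\<close> and \<open>\<phi> = (j + 1/2) / l \<cdot> \<pi>/2\<close>, the addition formula
  turns the gate on the token \<open>h\<^sub>t\<close> into \<open>M \<sigma> sin ((j + 1/2 - t) / l \<cdot> \<pi>/2)\<close>. As
  \<open>1/2 \<le> \<bar>j + 1/2 - t\<bar> \<le> l\<close>, this sine has the sign of \<open>j + 1/2 - t\<close> and modulus at least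
  \<open>1/(6l)\<close>, so \<open>M = 6 l \<parallel>H\<parallel>\<^sub>\<infinity>\<close> opens the gate on one side of the threshold \<open>j + 1/2\<close> and closes
  it on the other; the two claims are the thresholds \<open>k + 1/2\<close> and \<open>k - 1/2\<close>.\<close>

definition gate_W1 :: "real \<Rightarrow> real \<Rightarrow> nat \<Rightarrow> nat \<Rightarrow> real" where
  "gate_W1 a c j r =
     (if r = j div 2 + 1 then (-1) ^ j else 0) +
     (if j < 4 then (if r = 3 then a else if r = 4 then c else 0) else 0)"

definition gate_W2 :: "nat \<Rightarrow> nat \<Rightarrow> real" where
  "gate_W2 i j = (if i = j div 2 + 1 then (-1) ^ j * (if j < 4 then 1/2 else 1) else 0)"

definition gate_b2 :: "nat \<Rightarrow> real" where
  "gate_b2 i = (if i = 5 then 1 else 0)"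

lemma relu_minus_relu_neg: "relu x - relu (- x) = x"
  by (simp add: relu_def)

lemma gate_preact:
  assumes "j < 8"
  shows "(\<Sum>r\<in>{1..5}. gate_W1 a c j r * x r) =
    (-1) ^ j * x (j div 2 + 1) + (if j < 4 then a * x 3 + c * x 4 else 0)"
proof -
  have "j div 2 + 1 \<in> {1..5}" using assms by auto
  moreover have
    "(\<Sum>r\<in>{1..5}. (if r = 3 then a else if r = 4 then c else 0) * x r) = a * x 3 + c * x 4"
    by (simp add: numeral_eq_Suc atLeastAtMostSuc_conv)
  ultimately show ?thesis
    by (simp add: gate_W1_def distrib_right sum.distrib if_distrib[of "\<lambda>u. u * x _"] cong: if_cong)
qed

lemma ffn_gate_net:
  fixes a c :: real and x :: "nat \<Rightarrow> real"
  defines "g \<equiv> a * x 3 + c * x 4"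
  shows "ffn 8 (gate_W1 a c) (\<lambda>_. 0) gate_W2 gate_b2 x i =
    (if i \<in> {1, 2} then (relu (x i + g) - relu (- x i + g)) / 2
     else if i \<in> {3, 4} then x i else gate_b2 i)" (is "_ = ?rhs")
proof -
  have "ffn 8 (gate_W1 a c) (\<lambda>_. 0) gate_W2 gate_b2 x i =
      gate_b2 i + (\<Sum>j<8. gate_W2 i j * relu ((-1) ^ j * x (j div 2 + 1) + (if j < 4 then g else 0)))"
    unfolding ffn_def g_def
    by (intro arg_cong2[where f = "(+)"] refl sum.cong) (simp_all only: lessThan_iff gate_preact add_0)
  also have "\<dots> = ?rhs"
  proof (cases "i \<in> {1, 2, 3, 4}")
    case True
    have sum8: "(\<Sum>j<8::nat. f j) = f 0 + f 1 + f 2 + f 3 + f 4 + f 5 + f 6 + (f 7 :: real)" for f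
      by (simp add: numeral_eq_Suc lessThan_Suc)
    from True show ?thesis
      unfolding sum8
      by (elim insertE)
        (simp_all add: gate_W2_def gate_b2_def relu_minus_relu_neg diff_divide_distrib,
         simp add: numeral_2_eq_2)
  next
    case False
    then have "gate_W2 i j = 0" if "j < 8" for j
      using that by (auto simp: gate_W2_def)
    with False show ?thesis by simp
  qed
  finally show ?thesis .
qed

lemma gate_net_keeps:
  assumes "\<bar>x 1\<bar> \<le> a * x 3 + c * x 4" "\<bar>x 2\<bar> \<le> a * x 3 + c * x 4" "x 5 = 1" "i \<in> {1..5}"
  shows "ffn 8 (gate_W1 a c) (\<lambda>_. 0) gate_W2 gate_b2 x i = x i"
proof -
  have "relu (x i + g) - relu (- x i + g) = 2 * x i" if "\<bar>x i\<bar> \<le> g" for g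
    using that by (simp add: relu_def)
  moreover have "i = 1 \<or> i = 2 \<or> i = 3 \<or> i = 4 \<or> i = 5"
    using assms(4) by auto
  ultimately show ?thesis
    using assms by (elim disjE) (auto simp: ffn_gate_net gate_b2_def)
qed

lemma gate_net_erases:
  assumes "a * x 3 + c * x 4 \<le> - \<bar>x 1\<bar>" "a * x 3 + c * x 4 \<le> - \<bar>x 2\<bar>" "x 5 = 1" "i \<in> {1..5}"
  shows "ffn 8 (gate_W1 a c) (\<lambda>_. 0) gate_W2 gate_b2 x i = (if i \<in> {1, 2} then 0 else x i)"
proof -
  have "relu (x i + g) = 0 \<and> relu (- x i + g) = 0" if "g \<le> - \<bar>x i\<bar>" for g
    using that by (simp add: relu_def)
  moreover have "i = 1 \<or> i = 2 \<or> i = 3 \<or> i = 4 \<or> i = 5"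
    using assms(4) by auto
  ultimately show ?thesis
    using assms by (elim disjE) (auto simp: ffn_gate_net gate_b2_def)
qed

lemma params_bounded_gate_net:
  assumes "\<bar>a\<bar> \<le> B" "\<bar>c\<bar> \<le> B" "1 \<le> B"
  shows "params_bounded 8 (gate_W1 a c) (\<lambda>_. 0) gate_W2 gate_b2 B"
  using assms by (auto simp: params_bounded_def gate_W1_def gate_W2_def gate_b2_def)

lemma sin_ge_third:
  fixes y :: real
  assumes "0 \<le> y" "y \<le> 2"
  shows "y / 3 \<le> sin y"
proof -
  have "\<bar>sin y - (\<Sum>m<3. sin_coeff m * y ^ m)\<bar> \<le> inverse (fact 3) * \<bar>y\<bar> ^ 3"
    by (rule Maclaurin_sin_bound)
  moreover have "(\<Sum>m<3. sin_coeff m * y ^ m) = y"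
    by (simp add: numeral_eq_Suc lessThan_Suc sin_coeff_def)
  moreover have "y ^ 3 \<le> 4 * y"
  proof -
    have "y * y \<le> 2 * 2"
      using assms by (intro mult_mono) auto
    then have "y * (y * y) \<le> y * 4"
      using assms by (intro mult_left_mono) auto
    then show ?thesis by (simp add: power3_eq_cube mult.commute)
  qed
  ultimately have "\<bar>sin y - y\<bar> * 6 \<le> 4 * y"
    using assms by (simp add: fact_numeral)
  then show ?thesis by (simp add: abs_if split: if_splits)
qed

lemma sgn_mult_sin_ge:
  fixes s L :: real
  assumes "0 < L" "1/2 \<le> \<bar>s\<bar>" "\<bar>s\<bar> \<le> L"
  shows "1 / (6 * L) \<le> sgn s * sin (s / L * (pi / 2))"
proof -
  define y where "y = \<bar>s\<bar> / L * (pi / 2)"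
  have odd: "sgn s * sin (s / L * (pi / 2)) = sin y"
    unfolding y_def using assms(2) by (cases "s < 0") (auto simp: sgn_if)
  have "\<bar>s\<bar> / L \<le> 1"
    using assms by simp
  then have "y \<le> pi / 2"
    unfolding y_def using assms(1) by (intro mult_left_le_one_le) auto
  then have "y \<le> 2"
    using pi_less_4 by linarith
  have "1 / 2 / L * (pi / 2) \<le> y"
    unfolding y_def using assms by (intro mult_right_mono divide_right_mono) auto
  then have "1 / (6 * L) \<le> y / 3"
    using pi_ge_two assms(1) by (simp add: field_simps)
  also have "\<dots> \<le> sin y"
    by (rule sin_ge_third) (use \<open>y \<le> 2\<close> y_def assms(1) in auto)
  finally show ?thesis
    unfolding odd .
qed

lemma abs_le_Hinf:
  assumes "t \<in> {1..l}" "i \<in> {1..5}"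
  shows "\<bar>h t i\<bar> \<le> Hinf l h"
  unfolding Hinf_def
proof (rule Max_ge)
  show "finite {\<bar>h t i\<bar> |t i. t \<in> {1..l} \<and> i \<in> {1..5::nat}}"
    by (rule finite_image_set2) auto
  show "\<bar>h t i\<bar> \<in> {\<bar>h t i\<bar> |t i. t \<in> {1..l} \<and> i \<in> {1..5::nat}}"
    using assms by blast
qed

lemma one_le_Hinf:
  assumes "1 \<le> l" "structured l h"
  shows "1 \<le> Hinf l h"
proof -
  have "h 1 5 = 1"
    using assms unfolding structured_def by auto
  then show ?thesis
    using abs_le_Hinf[of 1 l 5 h] assms(1) by simp
qed

lemma erased_structured:
  assumes "structured l h" "t \<in> {1..l}" "i \<in> {1..5}"
  shows "erased l t i = (if i \<in> {1, 2} then 0 else h t i)"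
proof -
  have "i = 1 \<or> i = 2 \<or> i = 3 \<or> i = 4 \<or> i = 5"
    using assms(3) by auto
  then show ?thesis
    using assms(1,2) unfolding structured_def erased_def by auto
qed

lemma structured_rotate:
  assumes "structured l h" "t \<in> {1..l}"
  shows "sin \<phi> * h t 3 - cos \<phi> * h t 4 = sin (\<phi> - real t / real l * (pi / 2))"
  using assms by (simp add: structured_def pos1_def pos2_def sin_diff mult.commute)

lemma threshold_gate_bound:
  fixes l j t :: nat and h :: "nat \<Rightarrow> nat \<Rightarrow> real" and \<sigma> :: real
  assumes st: "structured l h" and j: "j < l" and t: "t \<in> {1..l}" and \<sigma>: "\<sigma> \<in> {1, -1}"
  defines "\<phi> \<equiv> (real j + 1/2) / real l * (pi / 2)"
  shows "1 / (6 * real l) \<le> (if 0 < \<sigma> * (real j + 1/2 - real t) then 1 else -1) *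
           (\<sigma> * (sin \<phi> * h t 3 - cos \<phi> * h t 4))"
proof -
  define s where "s = real j + 1/2 - real t"
  have "real j + 1 \<le> real l" "1 \<le> real t" "real t \<le> real l"
    using t j by auto
  moreover have "real t \<le> real j \<or> real j + 1 \<le> real t"
    by (cases "t \<le> j") auto
  ultimately have "1/2 \<le> \<bar>s\<bar>" "\<bar>s\<bar> \<le> real l" "0 < real l"
    by (auto simp: s_def)
  then have "1 / (6 * real l) \<le> sgn s * sin (s / real l * (pi / 2))"
    by (intro sgn_mult_sin_ge)
  moreover have "\<phi> - real t / real l * (pi / 2) = s / real l * (pi / 2)"
    using \<open>0 < real l\<close> by (simp add: \<phi>_def s_def field_simps)
  then have "sin \<phi> * h t 3 - cos \<phi> * h t 4 = sin (s / real l * (pi / 2))"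
    using structured_rotate[OF st t] by simp
  moreover have "(if 0 < \<sigma> * s then 1 else -1) * \<sigma> = sgn s"
    using \<sigma> \<open>1/2 \<le> \<bar>s\<bar>\<close> by (auto simp: sgn_if zero_less_mult_iff)
  ultimately show ?thesis
    by (simp add: s_def mult.assoc[symmetric])
qed

lemma threshold_network:
  fixes l j :: nat and h :: "nat \<Rightarrow> nat \<Rightarrow> real" and \<sigma> :: real
  assumes l: "2 \<le> l" and st: "structured l h" and j: "j < l" and \<sigma>: "\<sigma> \<in> {1, -1}"
  shows "\<exists>m W1 b1 W2 b2. params_bounded m W1 b1 W2 b2 (6 * real l * Hinf l h) \<and>
    (\<forall>t\<in>{1..l}. \<forall>i\<in>{1..5}. ffn m W1 b1 W2 b2 (h t) i =
       (if 0 < \<sigma> * (real j + 1/2 - real t) then h t i else erased l t i))"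
proof -
  define M where "M = 6 * real l * Hinf l h"
  define \<phi> where "\<phi> = (real j + 1/2) / real l * (pi / 2)"
  define a where "a = M * \<sigma> * sin \<phi>"
  define c where "c = - M * \<sigma> * cos \<phi>"
  have "1 \<le> real l" "1 \<le> Hinf l h"
    using l st one_le_Hinf[of l h] by auto
  then have "1 \<le> M"
    using mult_mono[of 1 "real l" 1 "Hinf l h"] by (simp add: M_def)
  moreover have "\<bar>\<sigma>\<bar> = 1"
    using \<sigma> by auto
  ultimately have "\<bar>a\<bar> \<le> M" "\<bar>c\<bar> \<le> M"
    by (simp_all add: a_def c_def abs_mult mult_left_le)
  then have bounded: "params_bounded 8 (gate_W1 a c) (\<lambda>_. 0) gate_W2 gate_b2 M"
    using \<open>1 \<le> M\<close> by (rule params_bounded_gate_net)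
  have "ffn 8 (gate_W1 a c) (\<lambda>_. 0) gate_W2 gate_b2 (h t) i =
      (if 0 < \<sigma> * (real j + 1/2 - real t) then h t i else erased l t i)"
    if t: "t \<in> {1..l}" and i: "i \<in> {1..5}" for t i
  proof -
    have "M * (1 / (6 * real l)) = Hinf l h"
      using \<open>1 \<le> real l\<close> by (simp add: M_def)
    moreover have "M * (1 / (6 * real l)) \<le>
        M * ((if 0 < \<sigma> * (real j + 1/2 - real t) then 1 else -1) *
             (\<sigma> * (sin \<phi> * h t 3 - cos \<phi> * h t 4)))"
      using threshold_gate_bound[OF st j t \<sigma>] \<open>1 \<le> M\<close> unfolding \<phi>_def
      by (intro mult_left_mono) auto
    moreover have "\<bar>h t 1\<bar> \<le> Hinf l h" "\<bar>h t 2\<bar> \<le> Hinf l h" "h t 5 = 1"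
      using t st by (auto intro: abs_le_Hinf simp: structured_def)
    ultimately show ?thesis
      using i gate_net_keeps[of "h t" a c i] gate_net_erases[of a "h t" c i]
        erased_structured[OF st t i]
      by (auto simp: a_def c_def algebra_simps split: if_splits)
  qed
  with bounded show ?thesis
    unfolding M_def by blast
qed

theorem lemma4:
  shows "\<exists>C>0. \<forall>l::nat. \<forall>h. \<forall>k::nat.
     2 \<le> l \<longrightarrow> structured l h \<longrightarrow> 1 \<le> k \<longrightarrow> k < l \<longrightarrow>
     (\<exists>m W1 b1 W2 b2. params_bounded m W1 b1 W2 b2 (C * real l * Hinf l h) \<and>
        (\<forall>t\<in>{1..k}. \<forall>i\<in>{1..5}. ffn m W1 b1 W2 b2 (h t) i = h t i) \<and>
        (\<forall>t\<in>{k<..l}. \<forall>i\<in>{1..5}. ffn m W1 b1 W2 b2 (h t) i = erased l t i)) \<and>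
     (\<exists>m W1 b1 W2 b2. params_bounded m W1 b1 W2 b2 (C * real l * Hinf l h) \<and>
        (\<forall>t\<in>{k..l}. \<forall>i\<in>{1..5}. ffn m W1 b1 W2 b2 (h t) i = h t i) \<and>
        (\<forall>t\<in>{1..<k}. \<forall>i\<in>{1..5}. ffn m W1 b1 W2 b2 (h t) i = erased l t i))"
proof (intro exI[of _ "6::real"] conjI allI impI)
  fix l k :: nat and h
  assume l: "2 \<le> l" and st: "structured l h" and "1 \<le> k" "k < l"
  show "\<exists>m W1 b1 W2 b2. params_bounded m W1 b1 W2 b2 (6 * real l * Hinf l h) \<and>
        (\<forall>t\<in>{1..k}. \<forall>i\<in>{1..5}. ffn m W1 b1 W2 b2 (h t) i = h t i) \<and>
        (\<forall>t\<in>{k<..l}. \<forall>i\<in>{1..5}. ffn m W1 b1 W2 b2 (h t) i = erased l t i)"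
    using threshold_network[OF l st \<open>k < l\<close> insertI1] \<open>k < l\<close>
    by (elim exE conjE, intro exI conjI) auto
  show "\<exists>m W1 b1 W2 b2. params_bounded m W1 b1 W2 b2 (6 * real l * Hinf l h) \<and>
        (\<forall>t\<in>{k..l}. \<forall>i\<in>{1..5}. ffn m W1 b1 W2 b2 (h t) i = h t i) \<and>
        (\<forall>t\<in>{1..<k}. \<forall>i\<in>{1..5}. ffn m W1 b1 W2 b2 (h t) i = erased l t i)"
    using threshold_network[OF l st less_imp_diff_less[OF \<open>k < l\<close>, of 1] insertI2[OF singletonI]]
      \<open>1 \<le> k\<close> \<open>k < l\<close>
    by (elim exE conjE, intro exI conjI) (auto simp: of_nat_diff)
qed simp

end
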